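(* Let ancillae $A_1,\dots,A_n$ consecutively measure a $d$-dimensional quantum system $Q$ (prepared in a pure state, or unprepared and purified by a reference $R$), and let each ancilla $A_k$ be amplified by a detector $D_k$. Then for all $1\le i$, $j\le n$ with $j\ge i+2$, the detectors $D_i$ and $D_j$ share no entropy given the intermediate detectors: $$S(D_i:D_j\,|\,D_{i+1}\cdots D_{j-1})=0,$$ where $S(D_i:D_j|D_{i+1}\cdots D_{j-1})=S(D_j|D_{j-1}\cdots D_{i+1})-S(D_j|D_{j-1}\cdots D_i)$.
   Context: Setting: $Q$ is $d$-dimensional; either prepared in $|Q\rangle=\sum_{x_1}\alpha^{(1)}_{x_1}|\widetilde{x}_1\rangle$, or unprepared, i.e. in $|QR\rangle=d^{-1/2}\sum_x|\widetilde{x}\rangle|x\rangle$ with a reference $R$. Ancilla $A_k$ measures $Q$ in the orthonormal basis $\{|\widetilde{x}_k\rangle\}$, with $U^{(k)}_{x_{k-1}x_k}=\langle\widetilde{x}_k|\widetilde{x}_{k-1}\rangle$ unitary; the measurement is the unitary $\sum_x|\widetilde{x}_k\rangle\langle\widetilde{x}_k|\otimes U_x$ with $U_x|0\rangle=|x\rangle$ on $Q$ and the $d$-dimensional ancilla (initially $|0\rangle$, basis $\{|x\rangle\}$), performed consecutively for $k=1,\dots,n$. Amplification: detector $D_k$ copies $A_k$'s basis state, $|x\rangle_{A_k}|0\rangle_{D_k}\mapsto|x\rangle_{A_k}|x\rangle_{D_k}$. Entropies are von Neumann entropies (log base $d$) of reduced states of the global pure state; $S(X|Y)=S(XY)-S(Y)$.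 *)

theory Defs
  imports "Jordan_Normal_Form.Char_Poly" "HOL-Computational_Algebra.Polynomial"
begin

text \<open>Registers: the system Q, the reference R, ancillae A k and detectors D k (k = 1..n).
  Every register is d-dimensional with computational basis indexed by 0..d-1.\<close>
datatype label = Q | R | A nat | D nat

type_synonym cfg = "label \<Rightarrow> nat"          \<comment> \<open>a computational basis state of all registers\<close>
type_synonym state = "cfg \<Rightarrow> complex"

text \<open>Orthonormality of a family of d vectors in C^d; vector x has y-th component bk x y,
  i.e. bk x y = <y|x~>.\<close>
definition orthonormal_basis :: "nat \<Rightarrow> (nat \<Rightarrow> nat \<Rightarrow> complex) \<Rightarrow> bool" where
  "orthonormal_basis d bk \<longleftrightarrow>
     (\<forall>x<d. \<forall>x'<d. (\<Sum>y<d. cnj (bk x y) * bk x' y) = (if x = x' then 1 else 0))"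

text \<open>Measurement of Q by ancilla A k in basis bk: the unitary
  sum_x |x~><x~| (x) U_x on Q (x) A_k with U_x |a> = |a + x mod d> (so U_x|0> = |x>).\<close>
definition measure_step :: "nat \<Rightarrow> (nat \<Rightarrow> nat \<Rightarrow> complex) \<Rightarrow> nat \<Rightarrow> state \<Rightarrow> state" where
  "measure_step d bk k \<psi> = (\<lambda>c. if c Q < d \<and> c (A k) < d then
      (\<Sum>q<d. \<Sum>a<d.
         (\<Sum>x<d. bk x (c Q) * cnj (bk x q) * (if c (A k) = (a + x) mod d then 1 else 0))
         * \<psi> (c(Q := q, A k := a)))
    else 0)"

text \<open>Amplification of A k by D k: |a>|e> -> |a>|e + a mod d> (so |x>|0> -> |x>|x>).\<close>
definition amplify_step :: "nat \<Rightarrow> nat \<Rightarrow> state \<Rightarrow> state" where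
  "amplify_step d k \<psi> = (\<lambda>c. if c (D k) < d \<and> c (A k) < d then
      \<psi> (c(D k := (c (D k) + d - c (A k)) mod d)) else 0)"

definition init_prepared :: "nat \<Rightarrow> (nat \<Rightarrow> complex) \<Rightarrow> state" where
  "init_prepared d \<phi> = (\<lambda>c. if (\<forall>l. l \<noteq> Q \<longrightarrow> c l = 0) \<and> c Q < d then \<phi> (c Q) else 0)"

text \<open>|QR> = d^(-1/2) sum_x |x~_1>_Q |x>_R.\<close>
definition init_unprepared :: "nat \<Rightarrow> (nat \<Rightarrow> nat \<Rightarrow> complex) \<Rightarrow> state" where
  "init_unprepared d b1 = (\<lambda>c. if (\<forall>l. l \<notin> {Q, R} \<longrightarrow> c l = 0) \<and> c Q < d \<and> c R < d
      then b1 (c R) (c Q) / complex_of_real (sqrt (real d)) else 0)"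

fun run :: "nat \<Rightarrow> (nat \<Rightarrow> nat \<Rightarrow> nat \<Rightarrow> complex) \<Rightarrow> state \<Rightarrow> nat \<Rightarrow> state" where
  "run d b \<psi>0 0 = \<psi>0"
| "run d b \<psi>0 (Suc k) = amplify_step d (Suc k) (measure_step d (b (Suc k)) (Suc k) (run d b \<psi>0 k))"

definition global_state ::
  "nat \<Rightarrow> (nat \<Rightarrow> nat \<Rightarrow> nat \<Rightarrow> complex) \<Rightarrow> bool \<Rightarrow> (nat \<Rightarrow> complex) \<Rightarrow> nat \<Rightarrow> state" where
  "global_state d b prepared \<phi> n =
     run d b (if prepared then init_prepared d \<phi> else init_unprepared d (b 1)) n"

definition active :: "bool \<Rightarrow> nat \<Rightarrow> label set" where
  "active prepared n = {Q} \<union> (if prepared then {} else {R}) \<union> A ` {1..n} \<union> D ` {1..n}"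

definition cfgs :: "nat \<Rightarrow> label set \<Rightarrow> cfg set" where
  "cfgs d L = {c. \<forall>l. (l \<in> L \<longrightarrow> c l < d) \<and> (l \<notin> L \<longrightarrow> c l = 0)}"

definition merge :: "label set \<Rightarrow> cfg \<Rightarrow> cfg \<Rightarrow> cfg" where
  "merge L c e = (\<lambda>l. if l \<in> L then c l else e l)"

definition enum_cfgs :: "nat \<Rightarrow> label set \<Rightarrow> nat \<Rightarrow> cfg" where
  "enum_cfgs d L = (SOME f. bij_betw f {..<card (cfgs d L)} (cfgs d L))"

text \<open>Reduced density matrix of the registers L (partial trace over Act - L), as a matrix
  w.r.t. an (arbitrary) enumeration of the basis configurations of L.\<close>
definition reduced_dm :: "nat \<Rightarrow> label set \<Rightarrow> state \<Rightarrow> label set \<Rightarrow> complex mat" where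
  "reduced_dm d Act \<psi> L = (let N = card (cfgs d L); f = enum_cfgs d L in
     mat N N (\<lambda>(i, j). \<Sum>e\<in>cfgs d (Act - L). \<psi> (merge L (f i) e) * cnj (\<psi> (merge L (f j) e))))"

definition eta :: "nat \<Rightarrow> real \<Rightarrow> real" where
  "eta d x = (if x \<le> 0 then 0 else x * log (real d) x)"

text \<open>Von Neumann entropy (log base d): minus the sum over eigenvalues (with algebraic
  multiplicity) of lambda log_d lambda.\<close>
definition vn_entropy :: "nat \<Rightarrow> complex mat \<Rightarrow> real" where
  "vn_entropy d M = - (\<Sum>z\<in>{z. poly (char_poly M) z = 0}.
      real (order z (char_poly M)) * eta d (Re z))"

definition entropy :: "nat \<Rightarrow> label set \<Rightarrow> state \<Rightarrow> label set \<Rightarrow> real" where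
  "entropy d Act \<psi> L = vn_entropy d (reduced_dm d Act \<psi> L)"

definition cond_entropy :: "nat \<Rightarrow> label set \<Rightarrow> state \<Rightarrow> label set \<Rightarrow> label set \<Rightarrow> real" where
  "cond_entropy d Act \<psi> X Y = entropy d Act \<psi> (X \<union> Y) - entropy d Act \<psi> Y"

end

theory Submission
  imports Defs
begin

text \<open>Each detector holds a copy of its ancilla's record, so on every amplitude in the support
  of the global state D k and A k agree. Tracing out everything but a set of detectors therefore
  leaves a diagonal density matrix, and detector entropies are Shannon entropies of the joint
  outcome distribution. That distribution is a Markov chain: later measurements do not change the
  marginal of earlier detectors, and after A k has read u the system is in the basis vector
  u~ of the k-th basis, so the next outcome w occurs with probability |<w~|u~>|^2 whatever the
  earlier outcomes were. Hence S(D j | D (j-1) ... D l) is the same for every l < j, namely the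
  average entropy of the row of transition probabilities selected by D (j-1), and the conditional
  mutual information vanishes.\<close>

section \<open>Entropy of a diagonal reduced state\<close>

lemma order_prod_linear_factors:
  "order z (\<Prod>a\<leftarrow>as. [:- a, 1::'a::idom:]) = count_list as z"
proof (induction as)
  case Nil
  then show ?case by (simp add: order_0I)
next
  case (Cons a as)
  have "[:- a, 1:] * (\<Prod>a\<leftarrow>as. [:- a, 1::'a:]) \<noteq> 0"
    by (rule no_zero_divisors) (auto simp: prod_list_zero_iff)
  then have "order z ([:- a, 1:] * (\<Prod>a\<leftarrow>as. [:- a, 1::'a:])) =
      order z [:- a, 1:] + order z (\<Prod>a\<leftarrow>as. [:- a, 1::'a:])"
    by (rule order_mult)
  moreover have "order z [:- a, 1::'a:] = (if a = z then 1 else 0)"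
    using order_power_n_n[of z 1] by (auto intro: order_0I)
  ultimately show ?case
    using Cons by simp
qed

lemma poly_prod_linear_factors_eq_0_iff:
  "poly (\<Prod>a\<leftarrow>as. [:- a, 1::'a::idom:]) z = 0 \<longleftrightarrow> z \<in> set as"
  by (induction as) auto

lemma sum_list_map_eq_sum_count_of_nat:
  "sum_list (map f xs) = (\<Sum>x\<in>set xs. of_nat (count_list xs x) * (f x :: 'a::comm_semiring_1))"
proof (induction xs)
  case Nil
  then show ?case by simp
next
  case (Cons a xs)
  have "(\<Sum>x\<in>set (a # xs). of_nat (count_list (a # xs) x) * f x)
      = (\<Sum>x\<in>insert a (set xs). of_nat (count_list xs x) * f x)
        + (\<Sum>x\<in>insert a (set xs). if a = x then f x else 0)"
    by (subst sum.distrib[symmetric]) (auto intro!: sum.cong simp: algebra_simps)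
  also have "(\<Sum>x\<in>insert a (set xs). if a = x then f x else 0) = f a"
    by (simp add: sum.delta)
  also have "(\<Sum>x\<in>insert a (set xs). of_nat (count_list xs x) * f x)
      = (\<Sum>x\<in>set xs. of_nat (count_list xs x) * f x)"
    by (cases "a \<in> set xs") (auto simp: count_list_0_iff insert_absorb)
  finally show ?case
    using Cons by (simp add: add.commute)
qed

lemma vn_entropy_upper_triangular:
  assumes "M \<in> carrier_mat N N" and "upper_triangular M"
  shows "vn_entropy d M = - (\<Sum>i<N. eta d (Re (M $$ (i, i))))"
proof -
  have cp: "char_poly M = (\<Prod>a\<leftarrow>diag_mat M. [:- a, 1:])"
    using char_poly_upper_triangular[OF assms] .
  have "{z. poly (char_poly M) z = 0} = set (diag_mat M)"
    unfolding cp poly_prod_linear_factors_eq_0_iff by blast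
  then have "(\<Sum>z\<in>{z. poly (char_poly M) z = 0}. real (order z (char_poly M)) * eta d (Re z))
      = sum_list (map (\<lambda>z. eta d (Re z)) (diag_mat M))"
    unfolding cp order_prod_linear_factors sum_list_map_eq_sum_count_of_nat by simp
  also have "\<dots> = (\<Sum>i<N. eta d (Re (M $$ (i, i))))"
    using assms(1) by (simp add: diag_mat_def sum_list_sum_nth atLeast0LessThan)
  finally show ?thesis
    unfolding vn_entropy_def by simp
qed

lemma cfgs_insert:
  assumes "l \<notin> X"
  shows "cfgs d (insert l X) = (\<lambda>(e, v). e(l := v)) ` (cfgs d X \<times> {..<d})"
proof
  show "cfgs d (insert l X) \<subseteq> (\<lambda>(e, v). e(l := v)) ` (cfgs d X \<times> {..<d})"
  proof
    fix c
    assume c: "c \<in> cfgs d (insert l X)"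
    then have "(c(l := 0), c l) \<in> cfgs d X \<times> {..<d}"
      using assms by (auto simp: cfgs_def)
    then show "c \<in> (\<lambda>(e, v). e(l := v)) ` (cfgs d X \<times> {..<d})"
      by (force intro: image_eqI[where x = "(c(l := 0), c l)"])
  qed
  show "(\<lambda>(e, v). e(l := v)) ` (cfgs d X \<times> {..<d}) \<subseteq> cfgs d (insert l X)"
    using assms by (auto simp: cfgs_def)
qed

lemma inj_on_cfgs_upd:
  assumes "l \<notin> X"
  shows "inj_on (\<lambda>(e, v). e(l := v)) (cfgs d X \<times> {..<d})"
proof (rule inj_onI, clarify)
  fix e v e' v'
  assume "e \<in> cfgs d X" "e' \<in> cfgs d X" "e(l := v) = e'(l := v')"
  then show "e = e' \<and> v = v'"
    using assms by (auto simp: cfgs_def fun_eq_iff) (metis fun_upd_same, metis fun_upd_other)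
qed

lemma sum_cfgs_insert:
  assumes "l \<notin> X"
  shows "(\<Sum>e\<in>cfgs d (insert l X). F e) = (\<Sum>e\<in>cfgs d X. \<Sum>v<d. F (e(l := v)))"
proof -
  have "(\<Sum>e\<in>cfgs d (insert l X). F e) = (\<Sum>p\<in>cfgs d X \<times> {..<d}. F ((\<lambda>(e, v). e(l := v)) p))"
    unfolding cfgs_insert[OF assms]
    by (rule sum.reindex[OF inj_on_cfgs_upd[OF assms], unfolded comp_def])
  also have "\<dots> = (\<Sum>e\<in>cfgs d X. \<Sum>v<d. F (e(l := v)))"
    by (simp add: sum.cartesian_product case_prod_unfold)
  finally show ?thesis .
qed

lemma finite_cfgs: "finite X \<Longrightarrow> finite (cfgs d X)"
proof (induction X rule: finite_induct)
  case empty
  have "cfgs d {} = {\<lambda>_. 0}"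
    by (auto simp: cfgs_def)
  then show ?case by simp
next
  case (insert l X)
  then show ?case by (simp add: cfgs_insert)
qed

text \<open>The diagonal entry of the reduced density matrix of L at the configuration y.\<close>
definition marginal :: "nat \<Rightarrow> label set \<Rightarrow> state \<Rightarrow> label set \<Rightarrow> cfg \<Rightarrow> real" where
  "marginal d Act \<psi> L y = (\<Sum>e\<in>cfgs d (Act - L). (cmod (\<psi> (merge L y e)))\<^sup>2)"

lemma marginal_nonneg: "0 \<le> marginal d Act \<psi> L y"
  unfolding marginal_def by (simp add: sum_nonneg)

lemma marginal_upd_outside:
  assumes "l \<notin> L"
  shows "marginal d Act \<psi> L (y(l := v)) = marginal d Act \<psi> L y"
proof -
  have "merge L (y(l := v)) = merge L y"
    using assms by (auto simp: merge_def fun_eq_iff)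
  then show ?thesis
    unfolding marginal_def by simp
qed

lemma sum_marginal_insert:
  assumes "l \<in> Act" and "l \<notin> L"
  shows "(\<Sum>v<d. marginal d Act \<psi> (insert l L) (y(l := v))) = marginal d Act \<psi> L y"
proof -
  have Act: "Act - L = insert l (Act - insert l L)"
    using assms by auto
  have "merge L y (e(l := v)) = merge (insert l L) (y(l := v)) e" for e v
    using assms unfolding merge_def by (auto simp: fun_eq_iff)
  then have "marginal d Act \<psi> L y
      = (\<Sum>e\<in>cfgs d (Act - insert l L). \<Sum>v<d. (cmod (\<psi> (merge (insert l L) (y(l := v)) e)))\<^sup>2)"
    unfolding marginal_def Act by (simp add: sum_cfgs_insert)
  also have "\<dots> = (\<Sum>v<d. marginal d Act \<psi> (insert l L) (y(l := v)))"
    unfolding marginal_def by (rule sum.swap)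
  finally show ?thesis by simp
qed

lemma sum_marginal_insert_weighted:
  assumes "l \<in> Act" and "l \<notin> L" and "\<And>y v. f (y(l := v)) = f y"
  shows "(\<Sum>y\<in>cfgs d (insert l L). marginal d Act \<psi> (insert l L) y * f y)
    = (\<Sum>y\<in>cfgs d L. marginal d Act \<psi> L y * f y)"
  unfolding sum_cfgs_insert[OF assms(2)] assms(3)
  by (simp add: sum_distrib_right[symmetric] sum_marginal_insert[OF assms(1,2)])

lemma entropy_eq_shannon_if_diagonal:
  assumes "finite L"
    and diagonal: "\<And>y y' e. y \<in> cfgs d L \<Longrightarrow> y' \<in> cfgs d L \<Longrightarrow> y \<noteq> y' \<Longrightarrow>
      e \<in> cfgs d (Act - L) \<Longrightarrow> \<psi> (merge L y e) * cnj (\<psi> (merge L y' e)) = 0"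
  shows "entropy d Act \<psi> L = - (\<Sum>y\<in>cfgs d L. eta d (marginal d Act \<psi> L y))"
proof -
  define N where "N = card (cfgs d L)"
  define f where "f = enum_cfgs d L"
  have "\<exists>h. bij_betw h {..<N} (cfgs d L)"
    using ex_bij_betw_nat_finite[OF finite_cfgs[OF assms(1)]] unfolding N_def atLeast0LessThan .
  then have bij: "bij_betw f {..<N} (cfgs d L)"
    unfolding f_def enum_cfgs_def N_def by (rule someI_ex)
  define M where "M = reduced_dm d Act \<psi> L"
  have M: "M = mat N N (\<lambda>(i, j). \<Sum>e\<in>cfgs d (Act - L). \<psi> (merge L (f i) e) * cnj (\<psi> (merge L (f j) e)))"
    unfolding M_def reduced_dm_def N_def f_def Let_def by simp
  have "upper_triangular M"
    unfolding upper_triangular_def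
  proof (intro allI impI)
    fix i j
    assume "i < dim_row M" and "j < i"
    then have "i < N" "j < N"
      unfolding M by auto
    moreover have "f i \<noteq> f j"
      using bij \<open>i < N\<close> \<open>j < N\<close> \<open>j < i\<close> unfolding bij_betw_def inj_on_def by (metis lessThan_iff less_irrefl)
    moreover have "f i \<in> cfgs d L" "f j \<in> cfgs d L"
      using bij \<open>i < N\<close> \<open>j < N\<close> unfolding bij_betw_def by auto
    ultimately show "M $$ (i, j) = 0"
      unfolding M by (auto intro!: sum.neutral diagonal)
  qed
  then have "entropy d Act \<psi> L = - (\<Sum>i<N. eta d (Re (M $$ (i, i))))"
    unfolding entropy_def M_def[symmetric] by (intro vn_entropy_upper_triangular) (simp add: M)
  also have "(\<Sum>i<N. eta d (Re (M $$ (i, i)))) = (\<Sum>i<N. eta d (marginal d Act \<psi> L (f i)))"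
  proof (rule sum.cong[OF refl])
    fix i
    assume "i \<in> {..<N}"
    then have "M $$ (i, i) = (\<Sum>e\<in>cfgs d (Act - L). complex_of_real ((cmod (\<psi> (merge L (f i) e)))\<^sup>2))"
      unfolding M by (simp add: complex_norm_square del: of_real_power)
    then show "eta d (Re (M $$ (i, i))) = eta d (marginal d Act \<psi> L (f i))"
      unfolding marginal_def by simp
  qed
  also have "\<dots> = (\<Sum>y\<in>cfgs d L. eta d (marginal d Act \<psi> L y))"
    by (rule sum.reindex_bij_betw[OF bij])
  finally show ?thesis .
qed

lemma eta_mult:
  assumes "0 \<le> a" and "0 \<le> b"
  shows "eta d (a * b) = a * eta d b + b * eta d a"
proof (cases "a = 0 \<or> b = 0")
  case True
  then show ?thesis unfolding eta_def by auto
next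
  case False
  then have "0 < a" "0 < b"
    using assms by auto
  moreover have "0 < a * b"
    using \<open>0 < a\<close> \<open>0 < b\<close> by simp
  ultimately have "eta d (a * b) = a * b * log (real d) (a * b)"
    "eta d a = a * log (real d) a" "eta d b = b * log (real d) b"
    unfolding eta_def by (auto simp: not_le[symmetric])
  then show ?thesis
    using \<open>0 < a\<close> \<open>0 < b\<close> by (simp add: log_mult_pos algebra_simps)
qed

section \<open>Orthonormal bases\<close>

lemma orthonormal_basis_norm:
  assumes "orthonormal_basis d bk" and "a < d"
  shows "(\<Sum>q<d. (cmod (bk a q))\<^sup>2) = 1"
proof -
  have "(\<Sum>q<d. cnj (bk a q) * bk a q) = 1"
    using assms unfolding orthonormal_basis_def by auto
  then have "complex_of_real (\<Sum>q<d. (cmod (bk a q))\<^sup>2) = 1"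
    by (simp only: of_real_sum complex_norm_square) (simp add: mult.commute)
  then show ?thesis
    by (metis of_real_eq_1_iff)
qed

lemma orthonormal_basis_complete:
  assumes ob: "orthonormal_basis d bk" and "q < d" and "q' < d"
  shows "(\<Sum>a<d. cnj (bk a q) * bk a q') = (if q = q' then 1 else 0)"
proof -
  define M where "M = mat d d (\<lambda>(x, y). bk x y)"
  define MH where "MH = mat d d (\<lambda>(y, x). cnj (bk x y))"
  have MMH: "M * MH = 1\<^sub>m d"
  proof (rule eq_matI)
    fix i j
    assume ij: "i < dim_row (1\<^sub>m d :: complex mat)" "j < dim_col (1\<^sub>m d :: complex mat)"
    then have "(M * MH) $$ (i, j) = (\<Sum>y<d. bk i y * cnj (bk j y))"
      unfolding M_def MH_def by (simp add: scalar_prod_def atLeast0LessThan)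
    also have "\<dots> = (\<Sum>y<d. cnj (bk j y) * bk i y)"
      by (simp add: mult.commute)
    also have "\<dots> = (if j = i then 1 else 0)"
      using ob ij unfolding orthonormal_basis_def by auto
    finally show "(M * MH) $$ (i, j) = 1\<^sub>m d $$ (i, j)"
      using ij by auto
  qed (auto simp: M_def MH_def)
  have "MH * M = 1\<^sub>m d"
    by (rule mat_mult_left_right_inverse[OF _ _ MMH]) (auto simp: M_def MH_def)
  then have "(MH * M) $$ (q, q') = 1\<^sub>m d $$ (q, q')"
    by simp
  then show ?thesis
    using assms(2,3) unfolding M_def MH_def by (simp add: scalar_prod_def atLeast0LessThan)
qed

lemma orthonormal_basis_parseval:
  assumes ob: "orthonormal_basis d bk"
  shows "(\<Sum>a<d. (cmod (\<Sum>q<d. cnj (bk a q) * v q))\<^sup>2) = (\<Sum>q<d. (cmod (v q))\<^sup>2)"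
proof -
  have "complex_of_real (\<Sum>a<d. (cmod (\<Sum>q<d. cnj (bk a q) * v q))\<^sup>2)
      = (\<Sum>a<d. (\<Sum>q<d. cnj (bk a q) * v q) * (\<Sum>q'<d. bk a q' * cnj (v q')))"
    by (simp only: of_real_sum complex_norm_square cnj_sum complex_cnj_mult complex_cnj_cnj)
  also have "\<dots> = (\<Sum>a<d. \<Sum>q<d. \<Sum>q'<d. v q * cnj (v q') * (cnj (bk a q) * bk a q'))"
    by (simp only: sum_product) (simp only: mult_ac)
  also have "\<dots> = (\<Sum>q<d. \<Sum>q'<d. \<Sum>a<d. v q * cnj (v q') * (cnj (bk a q) * bk a q'))"
    by (subst sum.swap) (rule sum.cong[OF refl], rule sum.swap)
  also have "\<dots> = (\<Sum>q<d. \<Sum>q'<d. v q * cnj (v q') * (\<Sum>a<d. cnj (bk a q) * bk a q'))"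
    by (simp only: sum_distrib_left)
  also have "\<dots> = (\<Sum>q<d. \<Sum>q'<d. if q' = q then v q * cnj (v q) else 0)"
    by (intro sum.cong refl) (auto simp: orthonormal_basis_complete[OF ob])
  also have "\<dots> = complex_of_real (\<Sum>q<d. (cmod (v q))\<^sup>2)"
    by (simp add: complex_norm_square del: of_real_power)
  finally show ?thesis
    by (simp only: of_real_eq_iff)
qed

section \<open>One measurement followed by its amplification\<close>

definition register_zero :: "state \<Rightarrow> label \<Rightarrow> bool" where
  "register_zero \<psi> l \<longleftrightarrow> (\<forall>c. c l \<noteq> 0 \<longrightarrow> \<psi> c = 0)"

lemma register_zero_measure_step:
  "l \<noteq> Q \<Longrightarrow> l \<noteq> A k \<Longrightarrow> register_zero \<psi> l \<Longrightarrow> register_zero (measure_step d bk k \<psi>) l"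
  unfolding register_zero_def measure_step_def by auto

lemma register_zero_amplify_step:
  "l \<noteq> D k \<Longrightarrow> register_zero \<psi> l \<Longrightarrow> register_zero (amplify_step d k \<psi>) l"
  unfolding register_zero_def amplify_step_def by auto

lemma sub_mod_neq_0: "(x::nat) < d \<Longrightarrow> y < d \<Longrightarrow> x \<noteq> y \<Longrightarrow> (x + d - y) mod d \<noteq> 0"
  by (cases "x < y") (auto simp: le_imp_diff_is_add mod_if)

text \<open>The amplitude <x~|psi> of the outcome x = c (A k), taken while A k and D k are still in |0>.\<close>
definition outcome_amplitude :: "nat \<Rightarrow> (nat \<Rightarrow> nat \<Rightarrow> complex) \<Rightarrow> nat \<Rightarrow> state \<Rightarrow> cfg \<Rightarrow> complex" where
  "outcome_amplitude d bk k \<psi> c = (\<Sum>q<d. cnj (bk (c (A k)) q) * \<psi> (c(Q := q, A k := 0, D k := 0)))"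

lemma outcome_amplitude_reset:
  assumes "c0 (A k) = 0" and "c0 (D k) = 0" and "\<And>l. l \<notin> {Q, A k, D k} \<Longrightarrow> c l = c0 l"
  shows "outcome_amplitude d bk k \<psi> c = (\<Sum>q<d. cnj (bk (c (A k)) q) * \<psi> (c0(Q := q)))"
proof -
  have "c(Q := q, A k := 0, D k := 0) = c0(Q := q)" for q
    using assms by (auto simp: fun_eq_iff)
  then show ?thesis
    unfolding outcome_amplitude_def by simp
qed

lemma measure_step_of_register_zero:
  assumes zA: "register_zero \<psi> (A k)" and "c Q < d" and "c (A k) < d"
  shows "measure_step d bk k \<psi> c
    = bk (c (A k)) (c Q) * (\<Sum>q<d. cnj (bk (c (A k)) q) * \<psi> (c(Q := q, A k := 0)))"
proof -
  have "(\<Sum>a<d. (\<Sum>x<d. bk x (c Q) * cnj (bk x q) * (if c (A k) = (a + x) mod d then 1 else 0))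
        * \<psi> (c(Q := q, A k := a)))
      = bk (c (A k)) (c Q) * (cnj (bk (c (A k)) q) * \<psi> (c(Q := q, A k := 0)))" for q
  proof -
    let ?F = "\<lambda>a. \<Sum>x<d. bk x (c Q) * cnj (bk x q) * (if c (A k) = (a + x) mod d then 1 else 0)"
    have "(\<Sum>a<d. ?F a * \<psi> (c(Q := q, A k := a))) = (\<Sum>a<d. if a = 0 then ?F 0 * \<psi> (c(Q := q, A k := 0)) else 0)"
      using zA unfolding register_zero_def by (intro sum.cong) auto
    also have "\<dots> = ?F 0 * \<psi> (c(Q := q, A k := 0))"
      using assms by simp
    also have "?F 0 = (\<Sum>x<d. if x = c (A k) then bk x (c Q) * cnj (bk x q) else 0)"
      by (intro sum.cong) auto
    also have "\<dots> = bk (c (A k)) (c Q) * cnj (bk (c (A k)) q)"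
      using assms by (simp add: sum.delta')
    finally show ?thesis
      by (simp only: mult.assoc)
  qed
  then show ?thesis
    unfolding measure_step_def using assms by (simp add: sum_distrib_left)
qed

lemma measure_amplify_step_eq:
  assumes zA: "register_zero \<psi> (A k)" and zD: "register_zero \<psi> (D k)"
  shows "amplify_step d k (measure_step d bk k \<psi>) c =
    (if c Q < d \<and> c (A k) < d \<and> c (D k) = c (A k)
     then bk (c (A k)) (c Q) * outcome_amplitude d bk k \<psi> c else 0)"
proof (cases "c Q < d \<and> c (D k) < d \<and> c (A k) < d")
  case False
  then show ?thesis
    unfolding amplify_step_def measure_step_def by auto
next
  case True
  define c' where "c' = c(D k := (c (D k) + d - c (A k)) mod d)"
  have amp: "amplify_step d k (measure_step d bk k \<psi>) c = measure_step d bk k \<psi> c'"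
    unfolding amplify_step_def c'_def using True by simp
  show ?thesis
  proof (cases "c (D k) = c (A k)")
    case False
    then have "c' (D k) \<noteq> 0"
      unfolding c'_def using True sub_mod_neq_0 by simp
    then have "\<psi> (c'(Q := q, A k := a)) = 0" for q a
      using zD unfolding register_zero_def by simp
    then show ?thesis
      unfolding amp unfolding measure_step_def using False by simp
  next
    case eq: True
    then have "c' = c(D k := 0)"
      unfolding c'_def using True by simp
    then have "c'(Q := q, A k := 0) = c(Q := q, A k := 0, D k := 0)" for q
      by (auto simp: fun_eq_iff)
    moreover have "c' Q = c Q" "c' (A k) = c (A k)"
      unfolding c'_def by simp_all
    ultimately show ?thesis
      unfolding amp outcome_amplitude_def using True eq by (simp add: measure_step_of_register_zero[OF zA])
  qed
qed

lemma sum_norm_measure_amplify_step: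
  assumes ob: "orthonormal_basis d bk"
    and zA: "register_zero \<psi> (A k)" and zD: "register_zero \<psi> (D k)"
    and c0: "c0 (A k) = 0" "c0 (D k) = 0"
  shows "(\<Sum>q<d. \<Sum>v<d. \<Sum>a<d.
      (cmod (amplify_step d k (measure_step d bk k \<psi>) (c0(Q := q, D k := v, A k := a))))\<^sup>2)
    = (\<Sum>q<d. (cmod (\<psi> (c0(Q := q))))\<^sup>2)"
proof -
  define s where "s a = (\<Sum>q<d. cnj (bk a q) * \<psi> (c0(Q := q)))" for a
  have "outcome_amplitude d bk k \<psi> (c0(Q := q, D k := v, A k := a)) = s a" for q v a
    unfolding s_def by (subst outcome_amplitude_reset[OF c0]) auto
  then have step: "(cmod (amplify_step d k (measure_step d bk k \<psi>) (c0(Q := q, D k := v, A k := a))))\<^sup>2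
      = (if v = a then (cmod (bk a q))\<^sup>2 * (cmod (s a))\<^sup>2 else 0)" if "q < d" "a < d" for q v a
    using that by (simp add: measure_amplify_step_eq[OF zA zD] norm_mult power_mult_distrib)
  have "(\<Sum>q<d. \<Sum>v<d. \<Sum>a<d.
      (cmod (amplify_step d k (measure_step d bk k \<psi>) (c0(Q := q, D k := v, A k := a))))\<^sup>2)
      = (\<Sum>q<d. \<Sum>a<d. \<Sum>v<d. if v = a then (cmod (bk a q))\<^sup>2 * (cmod (s a))\<^sup>2 else 0)"
    by (rule sum.cong[OF refl], rule sum.swap[THEN trans]) (simp add: step)
  also have "\<dots> = (\<Sum>a<d. \<Sum>q<d. (cmod (bk a q))\<^sup>2 * (cmod (s a))\<^sup>2)"
    by (subst sum.swap) (simp add: sum.delta')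
  also have "\<dots> = (\<Sum>a<d. (cmod (s a))\<^sup>2)"
    by (simp add: sum_distrib_right[symmetric] orthonormal_basis_norm[OF ob])
  also have "\<dots> = (\<Sum>q<d. (cmod (\<psi> (c0(Q := q))))\<^sup>2)"
    unfolding s_def by (rule orthonormal_basis_parseval[OF ob])
  finally show ?thesis .
qed

lemma born_rule_measure_amplify_step:
  assumes ob: "orthonormal_basis d bk"
    and zA: "register_zero \<psi> (A k)" and zD: "register_zero \<psi> (D k)"
    and c0: "c0 (A k) = 0" "c0 (D k) = 0" and "w < d"
  shows "(\<Sum>q<d. \<Sum>a<d. (cmod (amplify_step d k (measure_step d bk k \<psi>) (c0(Q := q, A k := a, D k := w))))\<^sup>2)
    = (cmod (\<Sum>q<d. cnj (bk w q) * \<psi> (c0(Q := q))))\<^sup>2"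
proof -
  define s where "s a = (\<Sum>q<d. cnj (bk a q) * \<psi> (c0(Q := q)))" for a
  have "outcome_amplitude d bk k \<psi> (c0(Q := q, A k := a, D k := v)) = s a" for q a v
    unfolding s_def by (subst outcome_amplitude_reset[OF c0]) auto
  then have "(\<Sum>a<d. (cmod (amplify_step d k (measure_step d bk k \<psi>) (c0(Q := q, A k := a, D k := w))))\<^sup>2)
      = (cmod (bk w q))\<^sup>2 * (cmod (s w))\<^sup>2" if "q < d" for q
    using that \<open>w < d\<close>
    by (simp add: measure_amplify_step_eq[OF zA zD] norm_mult power_mult_distrib if_distrib[of cmod]
        if_distrib[of "\<lambda>x::real. x\<^sup>2"] sum.delta' cong: if_cong)
  then have "(\<Sum>q<d. \<Sum>a<d. (cmod (amplify_step d k (measure_step d bk k \<psi>) (c0(Q := q, A k := a, D k := w))))\<^sup>2)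
      = (\<Sum>q<d. (cmod (bk w q))\<^sup>2) * (cmod (s w))\<^sup>2"
    by (simp add: sum_distrib_right)
  then show ?thesis
    using orthonormal_basis_norm[OF ob \<open>w < d\<close>] s_def by simp
qed

text \<open>After the step, Q is in the basis vector selected by the outcome read off D k.\<close>
lemma overlap_measure_amplify_step:
  assumes ob: "orthonormal_basis d bk"
    and zA: "register_zero \<psi> (A k)" and zD: "register_zero \<psi> (D k)"
  defines "\<psi>' \<equiv> amplify_step d k (measure_step d bk k \<psi>)"
  shows "(cmod (\<Sum>q<d. v q * \<psi>' (c(Q := q))))\<^sup>2
    = (\<Sum>q<d. (cmod (\<psi>' (c(Q := q))))\<^sup>2) * (cmod (\<Sum>q<d. v q * bk (c (D k)) q))\<^sup>2"
proof (cases "c (A k) < d \<and> c (D k) = c (A k)")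
  case True
  define t where "t = outcome_amplitude d bk k \<psi> c"
  have "outcome_amplitude d bk k \<psi> (c(Q := q)) = t" for q
    unfolding t_def outcome_amplitude_def by simp
  then have \<psi>': "\<psi>' (c(Q := q)) = (if q < d then bk (c (D k)) q * t else 0)" for q
    unfolding \<psi>'_def measure_amplify_step_eq[OF zA zD] using True by simp
  have "(\<Sum>q<d. (cmod (\<psi>' (c(Q := q))))\<^sup>2) = (\<Sum>q<d. (cmod (bk (c (D k)) q))\<^sup>2) * (cmod t)\<^sup>2"
    by (simp add: \<psi>' norm_mult power_mult_distrib sum_distrib_right)
  also have "\<dots> = (cmod t)\<^sup>2"
    using orthonormal_basis_norm[OF ob] True by simp
  moreover have "(\<Sum>q<d. v q * \<psi>' (c(Q := q))) = t * (\<Sum>q<d. v q * bk (c (D k)) q)"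
    by (simp add: \<psi>' sum_distrib_left mult_ac)
  ultimately show ?thesis
    by (simp add: norm_mult power_mult_distrib)
next
  case False
  then have "\<psi>' (c(Q := q)) = 0" for q
    unfolding \<psi>'_def measure_amplify_step_eq[OF zA zD] by auto
  then show ?thesis by simp
qed

section \<open>The joint distribution of the detectors\<close>

lemma active_Suc: "active p (Suc k) = insert (A (Suc k)) (insert (D (Suc k)) (active p k))"
  unfolding active_def by (auto simp: atLeastAtMostSuc_conv)

lemma merge_upd_outside: "l \<notin> L \<Longrightarrow> merge L y (e(l := v)) = (merge L y e)(l := v)"
  unfolding merge_def by (auto simp: fun_eq_iff)

lemma merge_insert: "merge (insert l L) y e = (merge L y e)(l := y l)"
  unfolding merge_def by (auto simp: fun_eq_iff)

definition transition_prob ::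
    "nat \<Rightarrow> (nat \<Rightarrow> nat \<Rightarrow> complex) \<Rightarrow> (nat \<Rightarrow> nat \<Rightarrow> complex) \<Rightarrow> nat \<Rightarrow> nat \<Rightarrow> real" where
  "transition_prob d bk bk' u w = (cmod (\<Sum>q<d. cnj (bk' w q) * bk u q))\<^sup>2"

lemma transition_prob_nonneg: "0 \<le> transition_prob d bk bk' u w"
  unfolding transition_prob_def by simp

lemma sum_transition_prob:
  assumes "orthonormal_basis d bk" and "orthonormal_basis d bk'" and "u < d"
  shows "(\<Sum>w<d. transition_prob d bk bk' u w) = 1"
  unfolding transition_prob_def orthonormal_basis_parseval[OF assms(2)] orthonormal_basis_norm[OF assms(1,3)] ..

context
  fixes d :: nat and b :: "nat \<Rightarrow> nat \<Rightarrow> nat \<Rightarrow> complex" and \<psi>0 :: state and p :: bool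
  assumes ancillas_zero: "\<And>m. register_zero \<psi>0 (A m)"
    and detectors_zero: "\<And>m. register_zero \<psi>0 (D m)"
begin

lemma register_zero_run:
  "k < m \<Longrightarrow> register_zero (run d b \<psi>0 k) (A m) \<and> register_zero (run d b \<psi>0 k) (D m)"
proof (induction k)
  case 0
  then show ?case
    using ancillas_zero detectors_zero by simp
next
  case (Suc k)
  then show ?case
    by (auto intro!: register_zero_amplify_step register_zero_measure_step)
qed

lemma register_zero_run_later:
  "register_zero (run d b \<psi>0 k) (A (Suc k))" "register_zero (run d b \<psi>0 k) (D (Suc k))"
  using register_zero_run[of k "Suc k"] by auto

lemma run_detector_eq_ancilla:
  assumes "run d b \<psi>0 k c \<noteq> 0" and "m \<in> {1..k}"
  shows "c (D m) = c (A m)"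
  using assms
proof (induction k arbitrary: c)
  case 0
  then show ?case by simp
next
  case (Suc k)
  have "amplify_step d (Suc k) (measure_step d (b (Suc k)) (Suc k) (run d b \<psi>0 k)) c \<noteq> 0"
    using Suc.prems by simp
  note nz = this[unfolded measure_amplify_step_eq[OF register_zero_run_later]]
  show ?case
  proof (cases "m = Suc k")
    case True
    then show ?thesis
      using nz by (auto split: if_splits)
  next
    case False
    have "outcome_amplitude d (b (Suc k)) (Suc k) (run d b \<psi>0 k) c \<noteq> 0"
      using nz by (auto split: if_splits)
    then obtain q where "cnj (b (Suc k) (c (A (Suc k))) q)
        * run d b \<psi>0 k (c(Q := q, A (Suc k) := 0, D (Suc k) := 0)) \<noteq> 0"
      unfolding outcome_amplitude_def by (meson sum.not_neutral_contains_not_neutral)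
    then have "run d b \<psi>0 k (c(Q := q, A (Suc k) := 0, D (Suc k) := 0)) \<noteq> 0"
      by simp
    from Suc.IH[OF this] show ?thesis
      using False Suc.prems by auto
  qed
qed

lemma entropy_detectors:
  assumes L: "L \<subseteq> D ` {1..n}"
  shows "entropy d (active p n) (run d b \<psi>0 n) L
    = - (\<Sum>y\<in>cfgs d L. eta d (marginal d (active p n) (run d b \<psi>0 n) L y))"
proof (rule entropy_eq_shannon_if_diagonal)
  show "finite L"
    using L by (rule finite_subset) simp
next
  fix y y' e
  assume y: "y \<in> cfgs d L" "y' \<in> cfgs d L" "y \<noteq> y'"
  then obtain l where "y l \<noteq> y' l"
    by (auto simp: fun_eq_iff)
  moreover from this have "l \<in> L"
    using y unfolding cfgs_def by force
  ultimately obtain l where "y l \<noteq> y' l" "l \<in> L"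
    by blast
  then obtain k where k: "k \<in> {1..n}" "l = D k"
    using L by auto
  have "A k \<notin> L"
    using L by auto
  then have "merge L y e (A k) = merge L y' e (A k)"
    by (simp add: merge_def)
  moreover have "merge L y e (D k) \<noteq> merge L y' e (D k)"
    using k \<open>l \<in> L\<close> \<open>y l \<noteq> y' l\<close> by (simp add: merge_def)
  ultimately have "run d b \<psi>0 n (merge L y e) = 0 \<or> run d b \<psi>0 n (merge L y' e) = 0"
    using run_detector_eq_ancilla[OF _ k(1)] by metis
  then show "run d b \<psi>0 n (merge L y e) * cnj (run d b \<psi>0 n (merge L y' e)) = 0"
    by auto
qed

lemma marginal_run_Suc:
  assumes ob: "orthonormal_basis d (b (Suc k))" and L: "L \<subseteq> D ` {1..k}"
  shows "marginal d (active p (Suc k)) (run d b \<psi>0 (Suc k)) L y = marginal d (active p k) (run d b \<psi>0 k) L y"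
proof -
  define X where "X = active p k - L - {Q}"
  have notin: "Q \<notin> L" "A (Suc k) \<notin> L" "D (Suc k) \<notin> L" "Q \<notin> X"
    "A (Suc k) \<notin> insert (D (Suc k)) (insert Q X)" "D (Suc k) \<notin> insert Q X"
    using L unfolding X_def active_def by auto
  have Act: "active p (Suc k) - L = insert (A (Suc k)) (insert (D (Suc k)) (insert Q X))"
    "active p k - L = insert Q X"
    unfolding X_def active_Suc using notin by (auto simp: active_def)
  have "marginal d (active p (Suc k)) (run d b \<psi>0 (Suc k)) L y
      = (\<Sum>e\<in>cfgs d X. \<Sum>q<d. \<Sum>v<d. \<Sum>a<d.
          (cmod (run d b \<psi>0 (Suc k) ((merge L y e)(Q := q, D (Suc k) := v, A (Suc k) := a))))\<^sup>2)"
    unfolding marginal_def Act sum_cfgs_insert[OF notin(5)] sum_cfgs_insert[OF notin(6)]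
      sum_cfgs_insert[OF notin(4)] merge_upd_outside[OF notin(1)] merge_upd_outside[OF notin(2)]
      merge_upd_outside[OF notin(3)] ..
  also have "\<dots> = (\<Sum>e\<in>cfgs d X. \<Sum>q<d. (cmod (run d b \<psi>0 k ((merge L y e)(Q := q))))\<^sup>2)"
  proof (rule sum.cong[OF refl])
    fix e
    assume "e \<in> cfgs d X"
    then have "(merge L y e) (A (Suc k)) = 0" "(merge L y e) (D (Suc k)) = 0"
      using notin unfolding cfgs_def merge_def X_def by auto
    then show "(\<Sum>q<d. \<Sum>v<d. \<Sum>a<d.
          (cmod (run d b \<psi>0 (Suc k) ((merge L y e)(Q := q, D (Suc k) := v, A (Suc k) := a))))\<^sup>2)
        = (\<Sum>q<d. (cmod (run d b \<psi>0 k ((merge L y e)(Q := q))))\<^sup>2)"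
      unfolding run.simps by (rule sum_norm_measure_amplify_step[OF ob register_zero_run_later])
  qed
  also have "\<dots> = marginal d (active p k) (run d b \<psi>0 k) L y"
    unfolding marginal_def Act sum_cfgs_insert[OF notin(4)] merge_upd_outside[OF notin(1)] ..
  finally show ?thesis .
qed

lemma marginal_run_mono:
  assumes ob: "\<forall>k\<in>{1..n}. orthonormal_basis d (b k)" and L: "L \<subseteq> D ` {1..j}"
    and "j \<le> k" and "k \<le> n"
  shows "marginal d (active p k) (run d b \<psi>0 k) L y = marginal d (active p j) (run d b \<psi>0 j) L y"
  using assms(3,4)
proof (induction k)
  case 0
  then show ?case by simp
next
  case (Suc k)
  show ?case
  proof (cases "j = Suc k")
    case False
    then have "j \<le> k"
      using Suc by simp
    have "marginal d (active p (Suc k)) (run d b \<psi>0 (Suc k)) L y = marginal d (active p k) (run d b \<psi>0 k) L y"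
      using ob L \<open>j \<le> k\<close> Suc.prems by (intro marginal_run_Suc) auto
    then show ?thesis
      using Suc.IH Suc.prems \<open>j \<le> k\<close> by simp
  qed simp
qed

lemma marginal_run_transition:
  assumes ob: "orthonormal_basis d (b k)" "orthonormal_basis d (b (Suc k))"
    and L: "L \<subseteq> D ` {1..k}" and Dk: "D k \<in> L" and w: "y (D (Suc k)) < d"
  shows "marginal d (active p (Suc k)) (run d b \<psi>0 (Suc k)) (insert (D (Suc k)) L) y
    = marginal d (active p k) (run d b \<psi>0 k) L y * transition_prob d (b k) (b (Suc k)) (y (D k)) (y (D (Suc k)))"
proof -
  obtain m where k: "k = Suc m"
    using L Dk by (cases k) auto
  define X where "X = active p k - L - {Q}"
  have notin: "Q \<notin> L" "A (Suc k) \<notin> L" "Q \<notin> X" "A (Suc k) \<notin> insert Q X"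
    "A (Suc k) \<notin> X" "D (Suc k) \<notin> X"
    using L unfolding X_def active_def by auto
  have "active p (Suc k) - insert (D (Suc k)) L = insert (A (Suc k)) (insert Q X)"
    "active p k - L = insert Q X"
    unfolding X_def active_Suc using notin by (auto simp: active_def)
  then have lhs: "marginal d (active p (Suc k)) (run d b \<psi>0 (Suc k)) (insert (D (Suc k)) L) y
      = (\<Sum>e\<in>cfgs d X. \<Sum>q<d. \<Sum>a<d.
          (cmod (run d b \<psi>0 (Suc k) ((merge L y e)(Q := q, A (Suc k) := a, D (Suc k) := y (D (Suc k))))))\<^sup>2)"
    and rhs: "marginal d (active p k) (run d b \<psi>0 k) L y
      = (\<Sum>e\<in>cfgs d X. \<Sum>q<d. (cmod (run d b \<psi>0 k ((merge L y e)(Q := q))))\<^sup>2)"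
    unfolding marginal_def by (simp_all add: sum_cfgs_insert notin merge_insert merge_upd_outside)
  have "(\<Sum>q<d. \<Sum>a<d.
          (cmod (run d b \<psi>0 (Suc k) ((merge L y e)(Q := q, A (Suc k) := a, D (Suc k) := y (D (Suc k))))))\<^sup>2)
      = (\<Sum>q<d. (cmod (run d b \<psi>0 k ((merge L y e)(Q := q))))\<^sup>2)
        * transition_prob d (b k) (b (Suc k)) (y (D k)) (y (D (Suc k)))"
    if "e \<in> cfgs d X" for e
  proof -
    have c0: "(merge L y e) (A (Suc k)) = 0" "(merge L y e) (D (Suc k)) = 0"
      using that notin L unfolding cfgs_def merge_def by auto
    have "(merge L y e) (D k) = y (D k)"
      using Dk unfolding merge_def by simp
    then show ?thesis
      using overlap_measure_amplify_step[OF ob(1) register_zero_run_later,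
          where v = "\<lambda>q. cnj (b (Suc k) (y (D (Suc k))) q)" and c = "merge L y e"]
      unfolding run.simps(2)[of d b \<psi>0 k] born_rule_measure_amplify_step[OF ob(2) register_zero_run_later c0 w]
      unfolding k run.simps(2) transition_prob_def by simp
  qed
  then show ?thesis
    unfolding lhs rhs sum_distrib_right by (rule sum.cong[OF refl])
qed

lemma marginal_insert_next_detector:
  assumes ob: "\<forall>k\<in>{1..n}. orthonormal_basis d (b k)" and "Suc k \<le> n"
    and L: "L \<subseteq> D ` {1..k}" and Dk: "D k \<in> L" and "w < d"
  shows "marginal d (active p n) (run d b \<psi>0 n) (insert (D (Suc k)) L) (y(D (Suc k) := w))
    = marginal d (active p n) (run d b \<psi>0 n) L y * transition_prob d (b k) (b (Suc k)) (y (D k)) w"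
proof -
  have "1 \<le> k"
    using L Dk by auto
  then have obk: "orthonormal_basis d (b k)" "orthonormal_basis d (b (Suc k))"
    using ob \<open>Suc k \<le> n\<close> by auto
  have "marginal d (active p n) (run d b \<psi>0 n) (insert (D (Suc k)) L) (y(D (Suc k) := w))
      = marginal d (active p (Suc k)) (run d b \<psi>0 (Suc k)) (insert (D (Suc k)) L) (y(D (Suc k) := w))"
    using L \<open>Suc k \<le> n\<close> by (intro marginal_run_mono[OF ob]) auto
  also have "\<dots> = marginal d (active p k) (run d b \<psi>0 k) L (y(D (Suc k) := w))
      * transition_prob d (b k) (b (Suc k)) (y (D k)) w"
    using marginal_run_transition[OF obk L Dk] \<open>w < d\<close> by simp
  also have "marginal d (active p k) (run d b \<psi>0 k) L (y(D (Suc k) := w))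
      = marginal d (active p n) (run d b \<psi>0 n) L y"
  proof -
    have "D (Suc k) \<notin> L"
      using L by auto
    then show ?thesis
      using L \<open>Suc k \<le> n\<close> by (subst marginal_run_mono[OF ob, of L k n]) (auto simp: marginal_upd_outside)
  qed
  finally show ?thesis .
qed

lemma cond_entropy_next_detector:
  assumes ob: "\<forall>k\<in>{1..n}. orthonormal_basis d (b k)" and "Suc k \<le> n"
    and L: "L \<subseteq> D ` {1..k}" and Dk: "D k \<in> L"
  shows "cond_entropy d (active p n) (run d b \<psi>0 n) {D (Suc k)} L
    = - (\<Sum>y\<in>cfgs d L. marginal d (active p n) (run d b \<psi>0 n) L y
          * (\<Sum>w<d. eta d (transition_prob d (b k) (b (Suc k)) (y (D k)) w)))"
proof -
  let ?P = "marginal d (active p n) (run d b \<psi>0 n)"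
  let ?T = "transition_prob d (b k) (b (Suc k))"
  have "1 \<le> k"
    using L Dk by auto
  then have obk: "orthonormal_basis d (b k)" "orthonormal_basis d (b (Suc k))"
    using ob \<open>Suc k \<le> n\<close> by auto
  have notin: "D (Suc k) \<notin> L"
    using L by auto
  have L': "insert (D (Suc k)) L \<subseteq> D ` {1..n}" "L \<subseteq> D ` {1..n}"
    using L \<open>Suc k \<le> n\<close> by auto
  have "entropy d (active p n) (run d b \<psi>0 n) (insert (D (Suc k)) L)
      = - (\<Sum>y\<in>cfgs d L. \<Sum>w<d. ?P L y * eta d (?T (y (D k)) w) + ?T (y (D k)) w * eta d (?P L y))"
    unfolding entropy_detectors[OF L'(1)] sum_cfgs_insert[OF notin]
    by (simp add: marginal_insert_next_detector[OF ob \<open>Suc k \<le> n\<close> L Dk] eta_mult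
        marginal_nonneg transition_prob_nonneg)
  also have "\<dots> = - (\<Sum>y\<in>cfgs d L. ?P L y * (\<Sum>w<d. eta d (?T (y (D k)) w)) + eta d (?P L y))"
  proof -
    have "y (D k) < d" if "y \<in> cfgs d L" for y
      using that Dk unfolding cfgs_def by auto
    then show ?thesis
      by (simp add: sum.distrib sum_distrib_left sum_distrib_right[symmetric] sum_transition_prob[OF obk])
  qed
  finally show ?thesis
    unfolding cond_entropy_def entropy_detectors[OF L'(2)] by (simp add: sum.distrib)
qed

lemma cond_entropy_next_detector_insert_earlier:
  assumes ob: "\<forall>k\<in>{1..n}. orthonormal_basis d (b k)" and "Suc k \<le> n"
    and L: "L \<subseteq> D ` {1..k}" and Dk: "D k \<in> L" and "l \<in> {1..k}" and "D l \<notin> L"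
  shows "cond_entropy d (active p n) (run d b \<psi>0 n) {D (Suc k)} (insert (D l) L)
    = cond_entropy d (active p n) (run d b \<psi>0 n) {D (Suc k)} L"
proof -
  have "D l \<in> active p n" "D l \<noteq> D k"
    using assms unfolding active_def by auto
  moreover have "insert (D l) L \<subseteq> D ` {1..k}"
    using L \<open>l \<in> {1..k}\<close> by auto
  ultimately show ?thesis
    using Dk \<open>D l \<notin> L\<close>
    by (simp add: cond_entropy_next_detector[OF ob \<open>Suc k \<le> n\<close>] L sum_marginal_insert_weighted)
qed

end

theorem corollary1:
  fixes d n i j :: nat and b :: "nat \<Rightarrow> nat \<Rightarrow> nat \<Rightarrow> complex"
    and prepared :: bool and \<phi> :: "nat \<Rightarrow> complex"
  assumes "\<forall>k\<in>{1..n}. orthonormal_basis d (b k)"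
    and "prepared \<Longrightarrow> (\<Sum>y<d. (cmod (\<phi> y))\<^sup>2) = 1"
    and "1 \<le> i" and "j \<le> n" and "i + 2 \<le> j"
  shows "cond_entropy d (active prepared n) (global_state d b prepared \<phi> n) {D j} (D ` {i+1..j-1})
       - cond_entropy d (active prepared n) (global_state d b prepared \<phi> n) {D j} (D ` {i..j-1}) = 0"
proof -
  define \<psi>0 where "\<psi>0 = (if prepared then init_prepared d \<phi> else init_unprepared d (b 1))"
  have zero: "register_zero \<psi>0 (A m)" "register_zero \<psi>0 (D m)" for m
    unfolding \<psi>0_def register_zero_def init_prepared_def init_unprepared_def by auto
  obtain k where j: "j = Suc k"
    using assms by (cases j) auto
  have "D ` {i..j-1} = insert (D i) (D ` {i+1..j-1})"
    using assms by (auto simp: image_iff)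
  moreover have "D ` {i+1..k} \<subseteq> D ` {1..k}" "D k \<in> D ` {i+1..k}" "i \<in> {1..k}" "D i \<notin> D ` {i+1..k}"
    using assms j by auto
  ultimately show ?thesis
    unfolding global_state_def \<psi>0_def[symmetric] using assms
    by (simp add: j cond_entropy_next_detector_insert_earlier[OF zero assms(1)])
qed

end
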